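(* For every $t\in\mathbb Q_{\ge0}\cup\{\infty\}$, there exist a word $w$ and a letter $\alpha\in\{x,y,z\}$ such that $\omega_t=w\alpha w^{-1}$ (as words).
   Context: Modified lattice: the planar graph with vertex set $\mathbb Z^2$ whose edges are the horizontal unit segments $[(i,j),(i+1,j)]$, the vertical unit segments $[(i,j),(i,j+1)]$, and the diagonal segments of slope $-1$ joining $(i,j+1)$ and $(i+1,j)$. Words $\omega_t$: set $\omega_{0/1}=x$, $\omega_{1/0}=z$ ($\frac10$ represents $\infty$). For a reduced fraction $t=p/q\in(0,\infty)$, let $L_t$ be the segment from $(0,0)$ to $(q,p)$, oriented from $(0,0)$ to $(q,p)$. List the edges of the modified lattice whose relative interior meets $L_t$, in the order of the intersection points along $L_t$. A horizontal (resp. diagonal, vertical) edge contributes the letter $x$ (resp. $y$, $z$) if the midpoint of the edge is not on the right-hand side of the oriented segment $L_t$ (including the case that the midpoint lies on $L_t$), and contributes $x^{-1}$ (resp. $y^{-1}$, $z^{-1}$) if the midpoint is on the right-hand side. The word $\omega_t$ is the concatenation of these letters in order. *)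

theory Defs
  imports Complex_Main "HOL-Library.Product_Lexorder"
begin

text \<open>Letters x, y, z; a generator is a letter with a sign (True = positive exponent).\<close>
datatype letter = Lx | Ly | Lz

type_synonym gen = "letter \<times> bool"

definition inv_word :: "gen list \<Rightarrow> gen list" where
  "inv_word w = rev (map (\<lambda>(a, e). (a, \<not> e)) w)"

text \<open>Crossings of the segment L from (0,0) to (q,p) with the relative interiors of
  edges of the modified lattice.  An element (s, i, j, k) records that the point
  (s*q, s*p), 0 \<le> s \<le> 1, of L lies in the relative interior of the edge of kind k
  with base index (i,j):
  k = 0: horizontal edge [(i,j),(i+1,j)];
  k = 1: diagonal edge joining (i,j+1) and (i+1,j);
  k = 2: vertical edge [(i,j),(i,j+1)].\<close>
definition crossings :: "int \<Rightarrow> int \<Rightarrow> (rat \<times> int \<times> int \<times> nat) set" where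
  "crossings p q =
     {(s, i, j, k). 0 \<le> s \<and> s \<le> 1 \<and>
       ((k = 0 \<and> s * of_int p = of_int j \<and>
           of_int i < s * of_int q \<and> s * of_int q < of_int i + 1)
      \<or> (k = 1 \<and> s * of_int q + s * of_int p = of_int (i + j + 1) \<and>
           of_int i < s * of_int q \<and> s * of_int q < of_int i + 1)
      \<or> (k = 2 \<and> s * of_int q = of_int i \<and>
           of_int j < s * of_int p \<and> s * of_int p < of_int j + 1))}"

definition edge_mid :: "nat \<Rightarrow> int \<Rightarrow> int \<Rightarrow> rat \<times> rat" where
  "edge_mid k i j =
     (if k = 0 then (of_int i + 1/2, of_int j)
      else if k = 1 then (of_int i + 1/2, of_int j + 1/2)
      else (of_int i, of_int j + 1/2))"

definition edge_letter :: "nat \<Rightarrow> letter" where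
  "edge_letter k = (if k = 0 then Lx else if k = 1 then Ly else Lz)"

text \<open>The midpoint m is on the right-hand side of the segment oriented from (0,0) to (q,p)
  iff q * m_y - p * m_x < 0.  The letter is positive iff the midpoint is not on the right.\<close>
definition edge_gen :: "int \<Rightarrow> int \<Rightarrow> nat \<Rightarrow> int \<Rightarrow> int \<Rightarrow> gen" where
  "edge_gen p q k i j =
     (edge_letter k,
      of_int q * snd (edge_mid k i j) - of_int p * fst (edge_mid k i j) \<ge> 0)"

text \<open>Word for the reduced fraction p/q, read in order along L (increasing parameter s).\<close>
definition omega_frac :: "int \<Rightarrow> int \<Rightarrow> gen list" where
  "omega_frac p q =
     map (\<lambda>(s, i, j, k). edge_gen p q k i j) (sorted_list_of_set (crossings p q))"

text \<open>t \<in> Q_{\<ge>0} \<union> {\<infinity>} is represented as rat option, None = \<infinity>.\<close>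
definition omega :: "rat option \<Rightarrow> gen list" where
  "omega t = (case t of
       None \<Rightarrow> [(Lz, True)]
     | Some r \<Rightarrow> (if r = 0 then [(Lx, True)]
                  else (let (p, q) = quotient_of r in omega_frac p q)))"

end

theory Submission
  imports Defs
begin

(* The point reflection z \<mapsto> (q, p) - z is a symmetry of the modified lattice that maps L onto
   itself with the orientation reversed.  It sends the crossing at parameter s to a crossing of the
   same kind at parameter 1 - s and exchanges the two sides of L, so crossings paired by it carry
   inverse letters.  The only crossing it fixes is the one at s = 1/2, which exists because p and q
   are not both even; its edge has the centre (q/2, p/2) of L as midpoint, so its letter is
   positive.  No other crossed edge has its midpoint on L: such a midpoint is a point of L with
   half-integer coordinates, not both integers, and coprimality of p and q forces it to be the
   centre. *)

type_synonym crossing = "rat \<times> int \<times> int \<times> nat"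

definition in_edge_interior :: "nat \<Rightarrow> int \<Rightarrow> int \<Rightarrow> rat \<Rightarrow> rat \<Rightarrow> bool" where
  "in_edge_interior k i j X Y \<longleftrightarrow>
      k = 0 \<and> Y = of_int j \<and> of_int i < X \<and> X < of_int i + 1
    \<or> k = 1 \<and> X + Y = of_int (i + j + 1) \<and> of_int i < X \<and> X < of_int i + 1
    \<or> k = 2 \<and> X = of_int i \<and> of_int j < Y \<and> Y < of_int j + 1"

lemma mem_crossings_iff:
  "(s, i, j, k) \<in> crossings p q \<longleftrightarrow>
     0 \<le> s \<and> s \<le> 1 \<and> in_edge_interior k i j (s * of_int q) (s * of_int p)"
  by (auto simp: crossings_def in_edge_interior_def)

lemma in_edge_interior_floor:
  assumes "in_edge_interior k i j X Y"
  shows "\<lfloor>X\<rfloor> = i" "\<lfloor>Y\<rfloor> = j" "k \<le> 2"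
proof -
  have "of_int i \<le> X \<and> X < of_int i + 1 \<and> of_int j \<le> Y \<and> Y < of_int j + 1 \<and> k \<le> 2"
    using assms unfolding in_edge_interior_def by auto
  then show "\<lfloor>X\<rfloor> = i" "\<lfloor>Y\<rfloor> = j" "k \<le> 2" by (simp_all add: floor_unique)
qed

lemma in_edge_interior_unique:
  assumes "in_edge_interior k i j X Y" "in_edge_interior k' i' j' X Y"
  shows "k = k' \<and> i = i' \<and> j = j'"
proof -
  have "i = i'" "j = j'"
    using in_edge_interior_floor[OF assms(1)] in_edge_interior_floor[OF assms(2)] by simp_all
  with assms show ?thesis unfolding in_edge_interior_def by auto
qed

lemma in_edge_interior_reflect:
  assumes "in_edge_interior k i j X Y"
  shows "in_edge_interior k
           (if k = 0 \<or> k = 1 then a - i - 1 else a - i) (if k = 0 then b - j else b - j - 1)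
           (of_int a - X) (of_int b - Y)"
  using assms by (auto simp: in_edge_interior_def)

lemma in_edge_interior_on_line_eq_edge_mid:
  assumes "p > 0" "q > 0" "in_edge_interior k i j X Y"
    and on_line: "of_int q * Y = of_int p * X"
    and mid_on_line: "of_int q * snd (edge_mid k i j) = of_int p * fst (edge_mid k i j)"
  shows "(X, Y) = edge_mid k i j"
proof -
  have P: "(of_int p :: rat) > 0" and Q: "(of_int q :: rat) > 0" using assms(1,2) by simp_all
  consider "k = 0" "Y = of_int j" | "k = 1" "X + Y = of_int i + of_int j + 1" | "k = 2" "X = of_int i"
    using assms(3) unfolding in_edge_interior_def by auto
  then show ?thesis
  proof cases
    case 1
    with on_line mid_on_line have "of_int p * X = of_int p * (of_int i + 1/2)"
      by (simp add: edge_mid_def)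
    with 1 P show ?thesis by (simp add: edge_mid_def)
  next
    case 2
    with mid_on_line have mid: "of_int q * (of_int j + 1/2) = (of_int p * (of_int i + 1/2) :: rat)"
      by (simp add: edge_mid_def)
    have "(of_int p + of_int q) * X = of_int q * (X + Y)"
      using on_line by (simp add: algebra_simps)
    also have "\<dots> = of_int q * (of_int i + 1/2) + of_int q * (of_int j + 1/2)"
      using 2 by (simp add: algebra_simps)
    also have "\<dots> = (of_int p + of_int q) * (of_int i + 1/2)"
      unfolding mid by (simp add: algebra_simps)
    finally have "X = of_int i + 1/2" using P Q by simp
    with 2 show ?thesis by (simp add: edge_mid_def)
  next
    case 3
    with on_line mid_on_line have "of_int q * Y = of_int q * (of_int j + 1/2)"
      by (simp add: edge_mid_def)
    with 3 Q show ?thesis by (simp add: edge_mid_def)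
  qed
qed

lemma edge_mid_odd_halves:
  "\<exists>A B. edge_mid k i j = (of_int A / 2, of_int B / 2) \<and> (odd A \<or> odd B)"
proof (cases "k = 0 \<or> k = 1")
  case True
  then show ?thesis
    by (intro exI[of _ "2 * i + 1"] exI[of _ "if k = 0 then 2 * j else 2 * j + 1"])
      (auto simp: edge_mid_def)
next
  case False
  then show ?thesis
    by (intro exI[of _ "2 * i"] exI[of _ "2 * j + 1"]) (auto simp: edge_mid_def)
qed

lemma Ints_if_coprime_multiples:
  fixes s :: "'a::comm_ring_1"
  assumes "coprime p q" "s * of_int p \<in> \<int>" "s * of_int q \<in> \<int>"
  shows "s \<in> \<int>"
proof -
  obtain u v where "u * p + v * q = 1"
    using bezout_int[of p q] assms(1) by (auto simp: coprime_iff_gcd_eq_1)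
  then have "s = s * of_int (u * p + v * q)" by simp
  also have "\<dots> = of_int u * (s * of_int p) + of_int v * (s * of_int q)"
    by (simp add: algebra_simps)
  finally show ?thesis using assms(2,3) by (metis Ints_add Ints_mult Ints_of_int)
qed

lemma eq_half_if_odd_halves:
  fixes s :: rat
  assumes "coprime p q" "0 \<le> s" "s \<le> 1"
    and "s * of_int q = of_int A / 2" "s * of_int p = of_int B / 2" "odd A \<or> odd B"
  shows "s = 1/2"
proof -
  have AB: "2 * s * of_int p = of_int B" "2 * s * of_int q = of_int A"
    using assms(4,5) by (simp_all add: field_simps)
  then have "2 * s * of_int p \<in> \<int>" "2 * s * of_int q \<in> \<int>" by simp_all
  then have "2 * s \<in> \<int>" using assms(1) Ints_if_coprime_multiples by blast
  then obtain n where n: "2 * s = of_int n" by (auto elim: Ints_cases)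
  have "of_int A = (of_int (n * q) :: rat)" "of_int B = (of_int (n * p) :: rat)"
    using AB n by (metis of_int_mult)+
  then have "A = n * q" "B = n * p" by (simp_all only: of_int_eq_iff)
  with assms(6) have "odd n" by auto
  moreover have "0 \<le> n" "n \<le> 2" using assms(2,3) n by (simp_all flip: of_int_le_iff)
  ultimately have "n = 1" by presburger
  with n show ?thesis by simp
qed

lemma crossings_eq_if_fst_eq:
  assumes "x \<in> crossings p q" "y \<in> crossings p q" "fst x = fst y"
  shows "x = y"
  using assms in_edge_interior_unique
  by (cases x; cases y) (auto simp: mem_crossings_iff)

lemma crossings_param_unique:
  assumes "p > 0" "q > 0" "(s, i, j, k) \<in> crossings p q" "(s', i, j, k) \<in> crossings p q"
  shows "s = s'"
proof -
  have P: "(of_int p :: rat) \<noteq> 0" and Q: "(of_int q :: rat) \<noteq> 0"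
    and PQ: "(of_int q + of_int p :: rat) \<noteq> 0"
    using assms(1,2) by linarith+
  from assms(3,4) consider
      "s * of_int p = of_int j" "s' * of_int p = of_int j"
    | "s * of_int q + s * of_int p = of_int (i + j + 1)"
      "s' * of_int q + s' * of_int p = of_int (i + j + 1)"
    | "s * of_int q = of_int i" "s' * of_int q = of_int i"
    unfolding mem_crossings_iff in_edge_interior_def by (elim conjE disjE) simp_all
  then show ?thesis
  proof cases
    case 1
    then have "s * of_int p = s' * of_int p" by simp
    with P show ?thesis by simp
  next
    case 2
    then have "s * (of_int q + of_int p) = s' * (of_int q + of_int p)"
      by (simp only: distrib_left)
    with PQ show ?thesis by simp
  next
    case 3
    then have "s * of_int q = s' * of_int q" by simp
    with Q show ?thesis by simp
  qed
qed

lemma crossings_index_bounds: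
  assumes "p \<ge> 0" "q \<ge> 0" "(s, i, j, k) \<in> crossings p q"
  shows "(i, j, k) \<in> {0..q} \<times> {0..p} \<times> {..2}"
proof -
  have s: "0 \<le> s" "s \<le> 1" and edge: "in_edge_interior k i j (s * of_int q) (s * of_int p)"
    using assms(3) by (simp_all add: mem_crossings_iff)
  have "0 \<le> s * of_int q" "s * of_int q \<le> of_int q" "0 \<le> s * of_int p" "s * of_int p \<le> of_int p"
    using s assms(1,2) by (simp_all add: mult_left_le_one_le)
  then have "0 \<le> \<lfloor>s * of_int q\<rfloor> \<and> \<lfloor>s * of_int q\<rfloor> \<le> q"
    and "0 \<le> \<lfloor>s * of_int p\<rfloor> \<and> \<lfloor>s * of_int p\<rfloor> \<le> p"
    by (simp_all add: floor_le_iff le_floor_iff)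
  with in_edge_interior_floor[OF edge] show ?thesis by simp
qed

lemma finite_crossings:
  assumes "p > 0" "q > 0"
  shows "finite (crossings p q)"
proof -
  have "inj_on snd (crossings p q)"
  proof (rule inj_onI)
    fix x y assume xy: "x \<in> crossings p q" "y \<in> crossings p q" "snd x = snd y"
    obtain s i j k where x: "x = (s, i, j, k)" by (cases x) auto
    moreover obtain s' where "y = (s', i, j, k)" using xy(3) x by (cases y) auto
    ultimately show "x = y" using xy crossings_param_unique[OF assms] by simp
  qed
  moreover have "snd ` crossings p q \<subseteq> {0..q} \<times> {0..p} \<times> {..2}"
  proof
    fix e assume "e \<in> snd ` crossings p q"
    then obtain s i j k where "(s, i, j, k) \<in> crossings p q" "e = (i, j, k)" by auto
    moreover have "0 \<le> p" "0 \<le> q" using assms by simp_all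
    ultimately show "e \<in> {0..q} \<times> {0..p} \<times> {..2}" using crossings_index_bounds by blast
  qed
  then have "finite (snd ` crossings p q)" by (rule finite_subset) simp
  ultimately show ?thesis by (rule finite_imageD[rotated])
qed

definition reflect_crossing :: "int \<Rightarrow> int \<Rightarrow> crossing \<Rightarrow> crossing" where
  "reflect_crossing p q = (\<lambda>(s, i, j, k).
     (1 - s, if k = 0 \<or> k = 1 then q - i - 1 else q - i, if k = 0 then p - j else p - j - 1, k))"

lemma fst_reflect_crossing [simp]: "fst (reflect_crossing p q x) = 1 - fst x"
  by (cases x) (simp add: reflect_crossing_def)

lemma reflect_crossing_in_crossings:
  assumes "x \<in> crossings p q"
  shows "reflect_crossing p q x \<in> crossings p q"
proof -
  obtain s i j k where x: "x = (s, i, j, k)" by (cases x) auto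
  have "(1 - s) * of_int q = of_int q - s * (of_int q :: rat)"
    "(1 - s) * of_int p = of_int p - s * (of_int p :: rat)"
    by (simp_all add: algebra_simps)
  with assms in_edge_interior_reflect[of k i j "s * of_int q" "s * of_int p" q p] show ?thesis
    by (simp add: x reflect_crossing_def mem_crossings_iff)
qed

lemma reflect_crossing_strict_antimono:
  assumes "x \<in> crossings p q" "y \<in> crossings p q" "x < y"
  shows "reflect_crossing p q y < reflect_crossing p q x"
proof -
  have "fst x \<noteq> fst y" using crossings_eq_if_fst_eq assms by blast
  with assms(3) have "fst x < fst y" by (auto simp: less_prod_def)
  then show ?thesis by (simp add: less_prod_def)
qed

definition crossing_side :: "int \<Rightarrow> int \<Rightarrow> crossing \<Rightarrow> rat" where
  "crossing_side p q = (\<lambda>(s, i, j, k).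
     of_int q * snd (edge_mid k i j) - of_int p * fst (edge_mid k i j))"

definition crossing_gen :: "int \<Rightarrow> int \<Rightarrow> crossing \<Rightarrow> gen" where
  "crossing_gen p q = (\<lambda>(s, i, j, k). edge_gen p q k i j)"

definition inv_gen :: "gen \<Rightarrow> gen" where
  "inv_gen = (\<lambda>(a, e). (a, \<not> e))"

lemma inv_word_eq: "inv_word w = rev (map inv_gen w)"
  by (simp add: inv_word_def inv_gen_def)

lemma crossing_side_reflect: "crossing_side p q (reflect_crossing p q x) = - crossing_side p q x"
  by (cases x) (auto simp: reflect_crossing_def crossing_side_def edge_mid_def algebra_simps)

lemma snd_crossing_gen: "snd (crossing_gen p q x) \<longleftrightarrow> 0 \<le> crossing_side p q x"
  by (cases x) (simp add: crossing_gen_def crossing_side_def edge_gen_def)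

lemma crossing_gen_reflect:
  assumes "crossing_side p q x \<noteq> 0"
  shows "crossing_gen p q (reflect_crossing p q x) = inv_gen (crossing_gen p q x)"
proof -
  have "fst (crossing_gen p q (reflect_crossing p q x)) = fst (crossing_gen p q x)"
    by (cases x) (simp add: crossing_gen_def reflect_crossing_def edge_gen_def)
  moreover have "snd (crossing_gen p q (reflect_crossing p q x)) \<longleftrightarrow> \<not> snd (crossing_gen p q x)"
    using assms by (auto simp: snd_crossing_gen crossing_side_reflect)
  ultimately show ?thesis by (simp add: inv_gen_def prod_eq_iff split: prod.split)
qed

lemma fst_eq_half_if_crossing_side_eq_0:
  assumes "p > 0" "q > 0" "coprime p q" "x \<in> crossings p q" "crossing_side p q x = 0"
  shows "fst x = 1/2"
proof -
  obtain s i j k where x: "x = (s, i, j, k)" by (cases x) auto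
  have s: "0 \<le> s" "s \<le> 1" and edge: "in_edge_interior k i j (s * of_int q) (s * of_int p)"
    using assms(4) by (simp_all add: x mem_crossings_iff)
  have "(s * of_int q, s * of_int p) = edge_mid k i j"
    using assms(1,2,5) by (intro in_edge_interior_on_line_eq_edge_mid[OF _ _ edge])
      (simp_all add: x crossing_side_def)
  moreover obtain A B where "edge_mid k i j = (of_int A / 2, of_int B / 2)" "odd A \<or> odd B"
    using edge_mid_odd_halves by blast
  ultimately have "s = 1/2" using eq_half_if_odd_halves[OF assms(3) s] by simp
  then show ?thesis by (simp add: x)
qed

lemma crossing_at_half_exists:
  assumes "coprime p q"
  shows "\<exists>c \<in> crossings p q. fst c = 1/2"
proof -
  from assms consider "even p" "odd q" | "odd p" "even q" | "odd p" "odd q"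
    by fastforce
  then show ?thesis
  proof cases
    case 1
    then obtain a b where "p = 2 * a" "q = 2 * b + 1" by (meson evenE oddE)
    then have "(1/2, b, a, 0) \<in> crossings p q" by (simp add: mem_crossings_iff in_edge_interior_def)
    then show ?thesis by force
  next
    case 2
    then obtain a b where "p = 2 * a + 1" "q = 2 * b" by (meson evenE oddE)
    then have "(1/2, b, a, 2) \<in> crossings p q" by (simp add: mem_crossings_iff in_edge_interior_def)
    then show ?thesis by force
  next
    case 3
    then obtain a b where "p = 2 * a + 1" "q = 2 * b + 1" by (meson evenE oddE)
    then have "(1/2, b, a, 1) \<in> crossings p q"
      by (simp add: mem_crossings_iff in_edge_interior_def algebra_simps)
    then show ?thesis by force
  qed
qed

lemma map_eq_rev_if_strict_antimono_endo:
  fixes xs :: "'a::linorder list"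
  assumes sorted: "sorted_wrt (<) xs" and endo: "\<sigma> ` set xs \<subseteq> set xs"
    and antimono: "\<And>x y. x \<in> set xs \<Longrightarrow> y \<in> set xs \<Longrightarrow> x < y \<Longrightarrow> \<sigma> y < \<sigma> x"
  shows "map \<sigma> xs = rev xs"
proof -
  have "inj_on \<sigma> (set xs)"
    by (rule linorder_inj_onI') (metis antimono order_less_irrefl)
  with endo have "set (rev (map \<sigma> xs)) = set xs" by (simp add: endo_inj_surj)
  moreover have "sorted_wrt (\<lambda>x y. \<sigma> y < \<sigma> x) xs"
    by (rule sorted_wrt_mono_rel[OF _ sorted]) (use antimono in blast)
  then have "sorted_wrt (<) (rev (map \<sigma> xs))" by (simp add: sorted_wrt_rev sorted_wrt_map)
  ultimately have "rev (map \<sigma> xs) = xs" using strict_sorted_equal[OF sorted] by simp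
  then show ?thesis by (metis rev_rev_ident)
qed

lemma map_split_at_fixed_point:
  assumes rev: "map \<sigma> xs = rev xs" and "distinct xs" "c \<in> set xs" "\<sigma> c = c"
    and f: "\<And>x. x \<in> set xs \<Longrightarrow> x \<noteq> c \<Longrightarrow> f (\<sigma> x) = \<iota> (f x)"
  shows "\<exists>w. map f xs = w @ [f c] @ rev (map \<iota> w)"
proof -
  obtain A B where xs: "xs = A @ c # B" using split_list[OF \<open>c \<in> set xs\<close>] by blast
  have eq: "map \<sigma> A @ c # map \<sigma> B = rev B @ c # rev A"
    using rev \<open>\<sigma> c = c\<close> xs by simp
  have "distinct (map \<sigma> A @ c # map \<sigma> B)" unfolding eq using \<open>distinct xs\<close> xs by auto
  moreover have "c \<notin> set (rev B)" "c \<notin> set (rev A)" using \<open>distinct xs\<close> xs by auto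
  ultimately have "map \<sigma> A = rev B"
    using eq append_Cons_eq_iff by (metis distinct_append distinct.simps(2))
  then have "B = rev (map \<sigma> A)" by simp
  moreover have "f (\<sigma> x) = \<iota> (f x)" if "x \<in> set A" for x
    using f[of x] that xs \<open>c \<notin> set (rev A)\<close> by auto
  ultimately have "map f B = rev (map \<iota> (map f A))" by (simp add: rev_map)
  with xs show ?thesis by (intro exI[of _ "map f A"]) simp
qed

lemma map_reflect_crossing_sorted_crossings:
  assumes "p > 0" "q > 0"
  shows "map (reflect_crossing p q) (sorted_list_of_set (crossings p q))
    = rev (sorted_list_of_set (crossings p q))"
proof (rule map_eq_rev_if_strict_antimono_endo)
  have set: "set (sorted_list_of_set (crossings p q)) = crossings p q"
    using finite_crossings[OF assms] by simp
  show "sorted_wrt (<) (sorted_list_of_set (crossings p q))"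
    by (rule strict_sorted_list_of_set)
  show "reflect_crossing p q ` set (sorted_list_of_set (crossings p q))
      \<subseteq> set (sorted_list_of_set (crossings p q))"
    using reflect_crossing_in_crossings by (auto simp: set)
  show "reflect_crossing p q y < reflect_crossing p q x"
    if "x \<in> set (sorted_list_of_set (crossings p q))" "y \<in> set (sorted_list_of_set (crossings p q))"
      "x < y" for x y
    using reflect_crossing_strict_antimono that by (simp add: set)
qed

lemma omega_frac_conjugate_of_letter:
  assumes "p > 0" "q > 0" "coprime p q"
  shows "\<exists>w a. omega_frac p q = w @ [(a, True)] @ inv_word w"
proof -
  let ?C = "crossings p q" and ?\<sigma> = "reflect_crossing p q"
  define xs where "xs = sorted_list_of_set ?C"
  have set_xs: "set xs = ?C" using finite_crossings[OF assms(1,2)] by (simp add: xs_def)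
  obtain c where c: "c \<in> ?C" "fst c = 1/2" using crossing_at_half_exists[OF assms(3)] by blast
  have "?\<sigma> c = c"
    using crossings_eq_if_fst_eq[OF reflect_crossing_in_crossings[OF c(1)] c(1)] c(2) by simp
  then have "crossing_side p q c = 0" using crossing_side_reflect[of p q c] by simp
  then have gen_c: "crossing_gen p q c = (fst (crossing_gen p q c), True)"
    by (simp add: prod_eq_iff snd_crossing_gen)
  have rev_xs: "map ?\<sigma> xs = rev xs"
    unfolding xs_def by (rule map_reflect_crossing_sorted_crossings[OF assms(1,2)])
  have "\<exists>w. map (crossing_gen p q) xs = w @ [crossing_gen p q c] @ rev (map inv_gen w)"
  proof (rule map_split_at_fixed_point[OF rev_xs])
    show "distinct xs" by (simp add: xs_def)
    show "c \<in> set xs" using c(1) by (simp add: set_xs)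
    show "?\<sigma> c = c" by fact
    show "crossing_gen p q (?\<sigma> x) = inv_gen (crossing_gen p q x)" if "x \<in> set xs" "x \<noteq> c" for x
    proof (rule crossing_gen_reflect)
      have "x \<in> ?C" using that(1) by (simp add: set_xs)
      with c that(2) show "crossing_side p q x \<noteq> 0"
        using fst_eq_half_if_crossing_side_eq_0[OF assms] crossings_eq_if_fst_eq by metis
    qed
  qed
  then obtain w where "map (crossing_gen p q) xs = w @ [crossing_gen p q c] @ rev (map inv_gen w)"
    by blast
  moreover have "omega_frac p q = map (crossing_gen p q) xs"
    by (simp add: omega_frac_def crossing_gen_def xs_def)
  ultimately show ?thesis using gen_c by (metis inv_word_eq)
qed

theorem proposition3p4:
  fixes t :: "rat option"
  assumes "case t of None \<Rightarrow> True | Some r \<Rightarrow> 0 \<le> r"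
  shows "\<exists>(w :: gen list) (a :: letter). omega t = w @ [(a, True)] @ inv_word w"
proof (cases t)
  case None
  then show ?thesis by (intro exI[of _ "[]"] exI[of _ Lz]) (simp add: omega_def inv_word_def)
next
  case (Some r)
  show ?thesis
  proof (cases "r = 0")
    case True
    with Some show ?thesis by (intro exI[of _ "[]"] exI[of _ Lx]) (simp add: omega_def inv_word_def)
  next
    case False
    obtain p q where pq: "quotient_of r = (p, q)" by fastforce
    have "q > 0" "coprime p q" using quotient_of_denom_pos[OF pq] quotient_of_coprime[OF pq] by simp_all
    moreover have "p > 0"
      using assms Some False quotient_of_div[OF pq] \<open>q > 0\<close> by (auto simp: zero_le_divide_iff)
    moreover have "omega t = omega_frac p q" using Some False pq by (simp add: omega_def)
    ultimately show ?thesis using omega_frac_conjugate_of_letter by simp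
  qed
qed

end
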